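(* Under A1, A2, A3 and A4, fiducial intervals are strictly nested. Moreover, for any $x\in\mathcal{X}$ the bounds of the interval are continuous in $\alpha$ and $\lambda_f(\theta,x)$ is continuous in $\theta$.
   Context: $\Theta$ is a connected open subset of $\mathbb{R}$, $\mathcal{X}\subseteq\mathbb{Z}$ consists of consecutive integers, $\mathrm{P}_\theta$ denotes probability under $P_\theta$. (A1) $\mathrm{P}_\theta(X=x)>0$ for all $(\theta,x)$; (A2) $\mathrm{P}_\theta(X\leq x)$ strictly decreasing in $\theta$ for each fixed $x\in\mathcal{X}\backslash\sup\mathcal{X}$; (A3) $\mathrm{P}_\theta(X=x)$ differentiable in $\theta$; (A4) for $x\in\mathcal{X}\backslash\sup\mathcal{X}$, $\lim_{\theta\to\inf\Theta}\mathrm{P}_\theta(X\leq x)=1$ and $\lim_{\theta\to\sup\Theta}\mathrm{P}_\theta(X\leq x)=0$. The fiducial $1-\alpha$ interval given observation $x$ is $(\theta_L,\theta_U)$ with $\sum_{k\leq x}\mathrm{P}_{\theta_L}(X=k)=\alpha/2$ and $\sum_{k\geq x}\mathrm{P}_{\theta_U}(X=k)=\alpha/2$. Its test p-value is $\lambda_f(\theta_0,x)=\min\big(2\sum_{k\leq x}\mathrm{P}_{\theta_0}(X=k),\,2\sum_{k\geq x}\mathrm{P}_{\theta_0}(X=k),\,1\big)$. An interval is strictly nested if the $1-\alpha$ interval is always a proper subset of the $1-\alpha_0$ interval when $1>\alpha>\alpha_0>0$. *)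

theory Defs
  imports "HOL-Analysis.Analysis" "HOL-Library.Extended_Real"
begin

text \<open>A discrete family: p theta k = P_theta(X = k), parameter set Theta (reals),
  support X (a set of consecutive integers).\<close>

definition consecutive :: "int set \<Rightarrow> bool" where
  "consecutive X \<longleftrightarrow> (\<forall>a\<in>X. \<forall>b\<in>X. \<forall>c. a \<le> c \<and> c \<le> b \<longrightarrow> c \<in> X)"

definition left_tail :: "(real \<Rightarrow> int \<Rightarrow> real) \<Rightarrow> int set \<Rightarrow> real \<Rightarrow> int \<Rightarrow> real" where
  "left_tail p X \<theta> x = infsum (p \<theta>) {k \<in> X. k \<le> x}"

definition right_tail :: "(real \<Rightarrow> int \<Rightarrow> real) \<Rightarrow> int set \<Rightarrow> real \<Rightarrow> int \<Rightarrow> real" where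
  "right_tail p X \<theta> x = infsum (p \<theta>) {k \<in> X. x \<le> k}"

definition theta_to_inf :: "real set \<Rightarrow> real filter" where
  "theta_to_inf \<Theta> = (if bdd_below \<Theta> then at_right (Inf \<Theta>) else at_bot)"

definition theta_to_sup :: "real set \<Rightarrow> real filter" where
  "theta_to_sup \<Theta> = (if bdd_above \<Theta> then at_left (Sup \<Theta>) else at_top)"

text \<open>Endpoints of the fiducial 1-alpha interval (as extended reals).
  theta_L solves sum_{k \<le> x} P(X=k) = alpha/2; when x = max X there is no solution
  and the endpoint is sup Theta.  theta_U solves sum_{k \<ge> x} P(X=k) = alpha/2; when
  x = min X the endpoint is inf Theta.\<close>
definition fid_theta_L :: "(real \<Rightarrow> int \<Rightarrow> real) \<Rightarrow> real set \<Rightarrow> int set \<Rightarrow> real \<Rightarrow> int \<Rightarrow> ereal" where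
  "fid_theta_L p \<Theta> X \<alpha> x =
     (if x + 1 \<in> X then ereal (THE \<theta>. \<theta> \<in> \<Theta> \<and> left_tail p X \<theta> x = \<alpha> / 2)
      else Sup (ereal ` \<Theta>))"

definition fid_theta_U :: "(real \<Rightarrow> int \<Rightarrow> real) \<Rightarrow> real set \<Rightarrow> int set \<Rightarrow> real \<Rightarrow> int \<Rightarrow> ereal" where
  "fid_theta_U p \<Theta> X \<alpha> x =
     (if x - 1 \<in> X then ereal (THE \<theta>. \<theta> \<in> \<Theta> \<and> right_tail p X \<theta> x = \<alpha> / 2)
      else Inf (ereal ` \<Theta>))"

text \<open>The fiducial interval: the open interval of parameters between the two endpoints
  (theta_U is the smaller one, theta_L the larger one).\<close>
definition fid_interval :: "(real \<Rightarrow> int \<Rightarrow> real) \<Rightarrow> real set \<Rightarrow> int set \<Rightarrow> real \<Rightarrow> int \<Rightarrow> real set" where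
  "fid_interval p \<Theta> X \<alpha> x =
     {\<theta> \<in> \<Theta>. fid_theta_U p \<Theta> X \<alpha> x < ereal \<theta> \<and> ereal \<theta> < fid_theta_L p \<Theta> X \<alpha> x}"

definition fid_pval :: "(real \<Rightarrow> int \<Rightarrow> real) \<Rightarrow> int set \<Rightarrow> real \<Rightarrow> int \<Rightarrow> real" where
  "fid_pval p X \<theta> x = min (2 * left_tail p X \<theta> x) (min (2 * right_tail p X \<theta> x) 1)"

end

theory Submission
  imports Defs
begin

text \<open>For \<open>x + 1 \<in> X\<close> the tail \<open>\<theta> \<mapsto> P\<^sub>\<theta>(X \<le> x)\<close> is continuous, strictly
  decreasing and runs from 1 to 0, so it is a homeomorphism of \<open>\<Theta>\<close> onto a set containing
  \<open>(0,1)\<close>. The upper endpoint is its inverse at \<open>\<alpha>/2\<close>; since \<open>P\<^sub>\<theta>(X \<ge> x) =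
  1 - P\<^sub>\<theta>(X \<le> x - 1)\<close>, the lower endpoint is the inverse of the tail up to \<open>x - 1\<close> at
  \<open>1 - \<alpha>/2\<close>. Both endpoints are therefore continuous and strictly monotone in \<open>\<alpha>\<close>,
  with the lower one below the upper one, and every \<open>x\<close> has a neighbour in \<open>X\<close>, so at
  least one endpoint is a genuine parameter that moves strictly: it lies in the wider
  interval but not in the narrower one.\<close>

lemma infsum_subset_finite_approx:
  fixes f :: "'a \<Rightarrow> real"
  assumes "(f has_sum 1) X" "\<And>x. x \<in> X \<Longrightarrow> 0 \<le> f x" "A \<subseteq> X" "finite F" "F \<subseteq> X"
  shows "\<bar>infsum f A - sum f (A \<inter> F)\<bar> \<le> 1 - sum f F"
proof -
  have summable: "f summable_on X"
    using assms(1) by (auto simp: summable_on_def)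
  then have summable_AF: "f summable_on (A - F)" and summable_XF: "f summable_on (X - F)"
    using assms(3) by (auto intro: summable_on_subset_banach)
  have "infsum f A = infsum f ((A \<inter> F) \<union> (A - F))"
    by (metis Int_Diff_Un)
  also have "\<dots> = sum f (A \<inter> F) + infsum f (A - F)"
    using summable_AF assms(4) by (subst infsum_Un_disjoint) auto
  finally have A: "infsum f A = sum f (A \<inter> F) + infsum f (A - F)" .
  have "1 = infsum f (F \<union> (X - F))"
    using assms(1,5) by (metis Un_Diff_cancel sup.absorb2 infsumI)
  also have "\<dots> = sum f F + infsum f (X - F)"
    using summable_XF assms(4) by (subst infsum_Un_disjoint) auto
  finally have X: "infsum f (X - F) = 1 - sum f F" by simp
  have "infsum f (A - F) \<le> infsum f (X - F)"
    using summable_AF summable_XF assms(2,3) by (intro infsum_mono2) auto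
  moreover have "0 \<le> infsum f (A - F)"
    using assms(2,3) by (intro infsum_nonneg) auto
  ultimately show ?thesis
    using A X by simp
qed

lemma continuous_on_infsum_of_probability:
  fixes p :: "'b::topological_space \<Rightarrow> 'a \<Rightarrow> real"
  assumes sum_one: "\<And>\<theta>. \<theta> \<in> S \<Longrightarrow> (p \<theta> has_sum 1) X"
    and nonneg: "\<And>\<theta> x. \<theta> \<in> S \<Longrightarrow> x \<in> X \<Longrightarrow> 0 \<le> p \<theta> x"
    and cont: "\<And>x. x \<in> X \<Longrightarrow> continuous_on S (\<lambda>\<theta>. p \<theta> x)"
    and "A \<subseteq> X"
  shows "continuous_on S (\<lambda>\<theta>. infsum (p \<theta>) A)"
  unfolding continuous_on_def tendsto_iff
proof (intro ballI allI impI)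
  fix \<theta>0 and e :: real
  assume \<theta>0: "\<theta>0 \<in> S" and "0 < e"
  define \<epsilon> where "\<epsilon> = e / 4"
  have "\<epsilon> > 0" using \<open>0 < e\<close> by (simp add: \<epsilon>_def)
  text \<open>A finite set carrying almost all the mass at \<open>\<theta>0\<close> carries almost all of it nearby too.\<close>
  obtain F where F: "finite F" "F \<subseteq> X" "\<bar>sum (p \<theta>0) F - 1\<bar> < \<epsilon>"
    using sum_one[OF \<theta>0] \<open>\<epsilon> > 0\<close>
    unfolding has_sum_def tendsto_iff eventually_finite_subsets_at_top dist_real_def by blast
  have near: "\<forall>\<^sub>F \<theta> in at \<theta>0 within S. \<bar>sum (p \<theta>) B - sum (p \<theta>0) B\<bar> < \<epsilon>" if "B \<subseteq> F" for B
  proof -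
    have "continuous_on S (\<lambda>\<theta>. sum (p \<theta>) B)"
      using cont F(2) that by (intro continuous_on_sum) auto
    then show ?thesis
      using \<theta>0 \<open>\<epsilon> > 0\<close> unfolding continuous_on_def tendsto_iff dist_real_def by blast
  qed
  have "\<forall>\<^sub>F \<theta> in at \<theta>0 within S. \<theta> \<in> S"
    by (simp add: eventually_at_filter)
  with near[OF subset_refl] near[OF Int_lower2[of A]]
  show "\<forall>\<^sub>F \<theta> in at \<theta>0 within S. dist (infsum (p \<theta>) A) (infsum (p \<theta>0) A) < e"
  proof eventually_elim
    case (elim \<theta>)
    have "\<bar>infsum (p \<theta>) A - sum (p \<theta>) (A \<inter> F)\<bar> \<le> 1 - sum (p \<theta>) F"
      "\<bar>infsum (p \<theta>0) A - sum (p \<theta>0) (A \<inter> F)\<bar> \<le> 1 - sum (p \<theta>0) F"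
      using infsum_subset_finite_approx[OF sum_one _ \<open>A \<subseteq> X\<close> F(1,2)] nonneg elim(3) \<theta>0 by auto
    with elim F(3) show ?case
      unfolding dist_real_def \<epsilon>_def by (simp only: abs_le_iff abs_less_iff) linarith
  qed
qed

lemma eventually_mem_theta_to_inf:
  fixes \<Theta> :: "real set"
  assumes "open \<Theta>" "connected \<Theta>" "\<Theta> \<noteq> {}"
  shows "\<forall>\<^sub>F \<theta> in theta_to_inf \<Theta>. \<theta> \<in> \<Theta>"
proof (cases "bdd_below \<Theta>")
  case True
  obtain t e where t: "t \<in> \<Theta>" "e > 0" "ball t e \<subseteq> \<Theta>"
    using assms(1,3) open_contains_ball by blast
  then have "t - e/2 \<in> \<Theta>"
    by (auto simp: dist_real_def subset_iff)
  then have "Inf \<Theta> < t"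
    using True cInf_lower[of "t - e/2" \<Theta>] t(2) by linarith
  moreover have "\<theta> \<in> \<Theta>" if "Inf \<Theta> < \<theta>" "\<theta> < t" for \<theta>
  proof -
    obtain s where "s \<in> \<Theta>" "s < \<theta>"
      using cInf_lessD[OF assms(3) \<open>Inf \<Theta> < \<theta>\<close>] by blast
    then show ?thesis
      using connected_contains_Icc[OF assms(2) \<open>s \<in> \<Theta>\<close> t(1)] that by auto
  qed
  ultimately show ?thesis
    using True by (auto simp: theta_to_inf_def eventually_at_right_field)
next
  case False
  obtain t where t: "t \<in> \<Theta>"
    using assms(3) by blast
  have "\<theta> \<in> \<Theta>" if "\<theta> \<le> t" for \<theta>
  proof -
    obtain s where "s \<in> \<Theta>" "s < \<theta>"
      using False unfolding bdd_below_def by (meson not_le)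
    then show ?thesis
      using connected_contains_Icc[OF assms(2) \<open>s \<in> \<Theta>\<close> t] that by auto
  qed
  then show ?thesis
    using False by (auto simp: theta_to_inf_def eventually_at_bot_linorder intro!: exI[of _ t])
qed

lemma eventually_mem_theta_to_sup:
  fixes \<Theta> :: "real set"
  assumes "open \<Theta>" "connected \<Theta>" "\<Theta> \<noteq> {}"
  shows "\<forall>\<^sub>F \<theta> in theta_to_sup \<Theta>. \<theta> \<in> \<Theta>"
proof (cases "bdd_above \<Theta>")
  case True
  obtain t e where t: "t \<in> \<Theta>" "e > 0" "ball t e \<subseteq> \<Theta>"
    using assms(1,3) open_contains_ball by blast
  then have "t + e/2 \<in> \<Theta>"
    by (auto simp: dist_real_def subset_iff)
  then have "t < Sup \<Theta>"
    using True cSup_upper[of "t + e/2" \<Theta>] t(2) by linarith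
  moreover have "\<theta> \<in> \<Theta>" if "t < \<theta>" "\<theta> < Sup \<Theta>" for \<theta>
  proof -
    obtain s where "s \<in> \<Theta>" "\<theta> < s"
      using less_cSupD[OF assms(3) \<open>\<theta> < Sup \<Theta>\<close>] by blast
    then show ?thesis
      using connected_contains_Icc[OF assms(2) t(1) \<open>s \<in> \<Theta>\<close>] that by auto
  qed
  ultimately show ?thesis
    using True by (auto simp: theta_to_sup_def eventually_at_left_field)
next
  case False
  obtain t where t: "t \<in> \<Theta>"
    using assms(3) by blast
  have "\<theta> \<in> \<Theta>" if "t \<le> \<theta>" for \<theta>
  proof -
    obtain s where "s \<in> \<Theta>" "\<theta> < s"
      using False unfolding bdd_above_def by (meson not_le)
    then show ?thesis
      using connected_contains_Icc[OF assms(2) t \<open>s \<in> \<Theta>\<close>] that by auto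
  qed
  then show ?thesis
    using False by (auto simp: theta_to_sup_def eventually_at_top_linorder intro!: exI[of _ t])
qed

lemma theta_to_inf_neq_bot: "theta_to_inf \<Theta> \<noteq> bot"
  by (simp add: theta_to_inf_def)

lemma theta_to_sup_neq_bot: "theta_to_sup \<Theta> \<noteq> bot"
  by (simp add: theta_to_sup_def)

lemma Inf_ereal_image_less:
  fixes \<Theta> :: "real set"
  assumes "open \<Theta>" "t \<in> \<Theta>"
  shows "Inf (ereal ` \<Theta>) < ereal t"
proof -
  obtain e where "e > 0" "ball t e \<subseteq> \<Theta>"
    using assms open_contains_ball by blast
  then have "t - e/2 \<in> \<Theta>"
    by (auto simp: dist_real_def subset_iff)
  then have "Inf (ereal ` \<Theta>) \<le> ereal (t - e/2)"
    by (intro Inf_lower imageI)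
  also have "\<dots> < ereal t"
    using \<open>e > 0\<close> by simp
  finally show ?thesis .
qed

lemma less_Sup_ereal_image:
  fixes \<Theta> :: "real set"
  assumes "open \<Theta>" "t \<in> \<Theta>"
  shows "ereal t < Sup (ereal ` \<Theta>)"
proof -
  obtain e where "e > 0" "ball t e \<subseteq> \<Theta>"
    using assms open_contains_ball by blast
  then have "t + e/2 \<in> \<Theta>"
    by (auto simp: dist_real_def subset_iff)
  have "ereal t < ereal (t + e/2)"
    using \<open>e > 0\<close> by simp
  also have "\<dots> \<le> Sup (ereal ` \<Theta>)"
    using \<open>t + e/2 \<in> \<Theta>\<close> by (intro Sup_upper imageI)
  finally show ?thesis .
qed

lemma consecutive_neighbour:
  assumes "consecutive X" "\<exists>a\<in>X. \<exists>b\<in>X. a \<noteq> b" "x \<in> X"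
  shows "x + 1 \<in> X \<or> x - 1 \<in> X"
proof -
  obtain y where "y \<in> X" "y \<noteq> x"
    using assms(2) by metis
  then have "x \<le> x + 1 \<and> x + 1 \<le> y \<or> y \<le> x - 1 \<and> x - 1 \<le> x"
    by linarith
  then show ?thesis
    using assms(1,3) \<open>y \<in> X\<close> unfolding consecutive_def by blast
qed

locale decreasing_onto_unit_interval =
  fixes f :: "real \<Rightarrow> real" and \<Theta> :: "real set"
  assumes open_Theta: "open \<Theta>" and connected_Theta: "connected \<Theta>" and Theta_nonempty: "\<Theta> \<noteq> {}"
    and continuous: "continuous_on \<Theta> f"
    and decreasing: "\<And>a b. a \<in> \<Theta> \<Longrightarrow> b \<in> \<Theta> \<Longrightarrow> a < b \<Longrightarrow> f b < f a"
    and tendsto_inf: "(f \<longlongrightarrow> 1) (theta_to_inf \<Theta>)"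
    and tendsto_sup: "(f \<longlongrightarrow> 0) (theta_to_sup \<Theta>)"
begin

lemma inj: "inj_on f \<Theta>"
  by (metis decreasing inj_onI less_irrefl linorder_neqE_linordered_idom)

lemma unit_interval_subset_image: "{0<..<1} \<subseteq> f ` \<Theta>"
proof
  fix c :: real
  assume "c \<in> {0<..<1}"
  have "\<forall>\<^sub>F \<theta> in theta_to_inf \<Theta>. \<theta> \<in> \<Theta> \<and> c < f \<theta>"
    using eventually_mem_theta_to_inf[OF open_Theta connected_Theta Theta_nonempty]
      order_tendstoD(1)[OF tendsto_inf] \<open>c \<in> {0<..<1}\<close> by (auto intro: eventually_conj)
  then obtain a where "a \<in> \<Theta>" "c < f a"
    using eventually_happens theta_to_inf_neq_bot by blast
  have "\<forall>\<^sub>F \<theta> in theta_to_sup \<Theta>. \<theta> \<in> \<Theta> \<and> f \<theta> < c"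
    using eventually_mem_theta_to_sup[OF open_Theta connected_Theta Theta_nonempty]
      order_tendstoD(2)[OF tendsto_sup] \<open>c \<in> {0<..<1}\<close> by (auto intro: eventually_conj)
  then obtain b where "b \<in> \<Theta>" "f b < c"
    using eventually_happens theta_to_sup_neq_bot by blast
  have "{f b..f a} \<subseteq> f ` \<Theta>"
    using connected_contains_Icc connected_continuous_image[OF continuous connected_Theta]
      \<open>a \<in> \<Theta>\<close> \<open>b \<in> \<Theta>\<close> by blast
  then show "c \<in> f ` \<Theta>"
    using \<open>c < f a\<close> \<open>f b < c\<close> by auto
qed

lemma the_inv_into_mem: "c \<in> {0<..<1} \<Longrightarrow> the_inv_into \<Theta> f c \<in> \<Theta>"
  using the_inv_into_into[OF inj] unit_interval_subset_image by blast

lemma f_the_inv_into: "c \<in> {0<..<1} \<Longrightarrow> f (the_inv_into \<Theta> f c) = c"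
  using f_the_inv_into_f[OF inj] unit_interval_subset_image by blast

lemma the_inv_into_strict_antimono:
  assumes "0 < c" "c < c'" "c' < 1"
  shows "the_inv_into \<Theta> f c' < the_inv_into \<Theta> f c"
proof (rule ccontr)
  assume "\<not> ?thesis"
  then have "f (the_inv_into \<Theta> f c') \<le> f (the_inv_into \<Theta> f c)"
    using decreasing[of "the_inv_into \<Theta> f c" "the_inv_into \<Theta> f c'"] assms
    by (cases "the_inv_into \<Theta> f c = the_inv_into \<Theta> f c'") (auto simp: the_inv_into_mem)
  then show False
    using assms by (simp add: f_the_inv_into)
qed

lemma continuous_on_the_inv_into: "continuous_on {0<..<1} (the_inv_into \<Theta> f)"
proof -
  have "path_connected \<Theta>"
    using connected_open_path_connected open_Theta connected_Theta by blast
  then obtain g where g: "homeomorphism \<Theta> (f ` \<Theta>) f g"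
    using injective_into_1d_eq_homeomorphism[OF continuous] inj by blast
  have "continuous_on (f ` \<Theta>) (the_inv_into \<Theta> f)"
  proof (rule continuous_on_eq)
    show "continuous_on (f ` \<Theta>) g"
      using g by (simp add: homeomorphism_def)
    show "g c = the_inv_into \<Theta> f c" if "c \<in> f ` \<Theta>" for c
      using g that by (auto simp: homeomorphism_def the_inv_into_f_f[OF inj])
  qed
  then show ?thesis
    using continuous_on_subset unit_interval_subset_image by blast
qed

end

locale fiducial_family =
  fixes p :: "real \<Rightarrow> int \<Rightarrow> real" and \<Theta> :: "real set" and X :: "int set"
  assumes open_Theta: "open \<Theta>" and connected_Theta: "connected \<Theta>" and Theta_nonempty: "\<Theta> \<noteq> {}"
    and consecutive_X: "consecutive X" and X_nontrivial: "\<exists>a\<in>X. \<exists>b\<in>X. a \<noteq> b"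
    and has_sum_one: "\<And>\<theta>. \<theta> \<in> \<Theta> \<Longrightarrow> (p \<theta> has_sum 1) X"
    and nonneg: "\<And>\<theta> x. \<theta> \<in> \<Theta> \<Longrightarrow> x \<in> X \<Longrightarrow> 0 \<le> p \<theta> x"
    and continuous_on_p: "\<And>x. x \<in> X \<Longrightarrow> continuous_on \<Theta> (\<lambda>\<theta>. p \<theta> x)"
    and left_tail_decreasing: "\<And>x \<theta>1 \<theta>2. x \<in> X \<Longrightarrow> x + 1 \<in> X \<Longrightarrow> \<theta>1 \<in> \<Theta> \<Longrightarrow> \<theta>2 \<in> \<Theta> \<Longrightarrow>
       \<theta>1 < \<theta>2 \<Longrightarrow> left_tail p X \<theta>2 x < left_tail p X \<theta>1 x"
    and left_tail_limits: "\<And>x. x \<in> X \<Longrightarrow> x + 1 \<in> X \<Longrightarrow>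
       ((\<lambda>\<theta>. left_tail p X \<theta> x) \<longlongrightarrow> 1) (theta_to_inf \<Theta>) \<and>
       ((\<lambda>\<theta>. left_tail p X \<theta> x) \<longlongrightarrow> 0) (theta_to_sup \<Theta>)"
begin

lemma continuous_on_left_tail: "continuous_on \<Theta> (\<lambda>\<theta>. left_tail p X \<theta> x)"
  unfolding left_tail_def
  by (rule continuous_on_infsum_of_probability[OF has_sum_one nonneg continuous_on_p]) auto

lemma continuous_on_right_tail: "continuous_on \<Theta> (\<lambda>\<theta>. right_tail p X \<theta> x)"
  unfolding right_tail_def
  by (rule continuous_on_infsum_of_probability[OF has_sum_one nonneg continuous_on_p]) auto

lemma left_tail_mono:
  assumes "\<theta> \<in> \<Theta>" "x \<le> y"
  shows "left_tail p X \<theta> x \<le> left_tail p X \<theta> y"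
proof -
  have "p \<theta> summable_on X"
    using has_sum_one[OF assms(1)] by (auto simp: summable_on_def)
  then show ?thesis
    unfolding left_tail_def using assms nonneg
    by (intro infsum_mono2) (auto intro: summable_on_subset_banach)
qed

lemma left_tail_plus_right_tail:
  assumes "\<theta> \<in> \<Theta>"
  shows "left_tail p X \<theta> (x - 1) + right_tail p X \<theta> x = 1"
proof -
  have "p \<theta> summable_on X"
    using has_sum_one[OF assms] by (auto simp: summable_on_def)
  then have "infsum (p \<theta>) ({k \<in> X. k \<le> x - 1} \<union> {k \<in> X. x \<le> k})
      = left_tail p X \<theta> (x - 1) + right_tail p X \<theta> x"
    unfolding left_tail_def right_tail_def
    by (intro infsum_Un_disjoint) (auto intro: summable_on_subset_banach)
  moreover have "{k \<in> X. k \<le> x - 1} \<union> {k \<in> X. x \<le> k} = X"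
    by auto
  ultimately show ?thesis
    using infsumI[OF has_sum_one[OF assms]] by simp
qed

lemma decreasing_onto_left_tail:
  assumes "x \<in> X" "x + 1 \<in> X"
  shows "decreasing_onto_unit_interval (\<lambda>\<theta>. left_tail p X \<theta> x) \<Theta>"
  using open_Theta connected_Theta Theta_nonempty continuous_on_left_tail
    left_tail_decreasing[OF assms] left_tail_limits[OF assms]
  by unfold_locales auto

abbreviation left_tail_inv :: "int \<Rightarrow> real \<Rightarrow> real" where
  "left_tail_inv x \<equiv> the_inv_into \<Theta> (\<lambda>\<theta>. left_tail p X \<theta> x)"

lemma fid_theta_L_eq: "x + 1 \<in> X \<Longrightarrow> fid_theta_L p \<Theta> X \<alpha> x = ereal (left_tail_inv x (\<alpha> / 2))"
  by (simp add: fid_theta_L_def the_inv_into_def)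

lemma fid_theta_U_eq:
  assumes "x - 1 \<in> X"
  shows "fid_theta_U p \<Theta> X \<alpha> x = ereal (left_tail_inv (x - 1) (1 - \<alpha> / 2))"
proof -
  have "(\<theta> \<in> \<Theta> \<and> right_tail p X \<theta> x = \<alpha> / 2) \<longleftrightarrow> (\<theta> \<in> \<Theta> \<and> left_tail p X \<theta> (x - 1) = 1 - \<alpha> / 2)"
    for \<theta>
    using left_tail_plus_right_tail[of \<theta> x] by auto
  then show ?thesis
    using assms by (simp add: fid_theta_U_def the_inv_into_def)
qed

lemma fid_theta_L_strict_antimono:
  assumes "x \<in> X" "x + 1 \<in> X" "0 < \<alpha>0" "\<alpha>0 < \<alpha>" "\<alpha> < 1"
  shows "fid_theta_L p \<Theta> X \<alpha> x < fid_theta_L p \<Theta> X \<alpha>0 x"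
proof -
  interpret decreasing_onto_unit_interval "\<lambda>\<theta>. left_tail p X \<theta> x" \<Theta>
    using decreasing_onto_left_tail assms(1,2) .
  show ?thesis
    using the_inv_into_strict_antimono[of "\<alpha>0 / 2" "\<alpha> / 2"] assms by (simp add: fid_theta_L_eq)
qed

lemma fid_theta_U_strict_mono:
  assumes "x \<in> X" "x - 1 \<in> X" "0 < \<alpha>0" "\<alpha>0 < \<alpha>" "\<alpha> < 1"
  shows "fid_theta_U p \<Theta> X \<alpha>0 x < fid_theta_U p \<Theta> X \<alpha> x"
proof -
  interpret decreasing_onto_unit_interval "\<lambda>\<theta>. left_tail p X \<theta> (x - 1)" \<Theta>
    using decreasing_onto_left_tail assms(1,2) by simp
  show ?thesis
    using the_inv_into_strict_antimono[of "1 - \<alpha> / 2" "1 - \<alpha>0 / 2"] assms by (simp add: fid_theta_U_eq)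
qed

lemma fid_theta_L_antimono:
  assumes "x \<in> X" "0 < \<alpha>0" "\<alpha>0 \<le> \<alpha>" "\<alpha> < 1"
  shows "fid_theta_L p \<Theta> X \<alpha> x \<le> fid_theta_L p \<Theta> X \<alpha>0 x"
  using fid_theta_L_strict_antimono[of x \<alpha>0 \<alpha>] assms
  by (cases "\<alpha>0 = \<alpha>") (auto simp: fid_theta_L_def order_less_imp_le)

lemma fid_theta_U_mono:
  assumes "x \<in> X" "0 < \<alpha>0" "\<alpha>0 \<le> \<alpha>" "\<alpha> < 1"
  shows "fid_theta_U p \<Theta> X \<alpha>0 x \<le> fid_theta_U p \<Theta> X \<alpha> x"
  using fid_theta_U_strict_mono[of x \<alpha>0 \<alpha>] assms
  by (cases "\<alpha>0 = \<alpha>") (auto simp: fid_theta_U_def order_less_imp_le)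


lemma fid_theta_U_less_L:
  assumes "x \<in> X" "0 < \<alpha>" "\<alpha> < 1"
  shows "fid_theta_U p \<Theta> X \<alpha> x < fid_theta_L p \<Theta> X \<alpha> x"
proof (cases "x + 1 \<in> X")
  case True
  interpret L: decreasing_onto_unit_interval "\<lambda>\<theta>. left_tail p X \<theta> x" \<Theta>
    using decreasing_onto_left_tail assms(1) True .
  define t where "t = left_tail_inv x (\<alpha> / 2)"
  have t: "t \<in> \<Theta>" "left_tail p X t x = \<alpha> / 2"
    using assms L.the_inv_into_mem L.f_the_inv_into by (auto simp: t_def)
  show ?thesis
  proof (cases "x - 1 \<in> X")
    case True
    interpret U: decreasing_onto_unit_interval "\<lambda>\<theta>. left_tail p X \<theta> (x - 1)" \<Theta>
      using decreasing_onto_left_tail assms(1) True by simp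
    define u where "u = left_tail_inv (x - 1) (1 - \<alpha> / 2)"
    have u: "u \<in> \<Theta>" "left_tail p X u (x - 1) = 1 - \<alpha> / 2"
      using assms U.the_inv_into_mem U.f_the_inv_into by (auto simp: u_def)
    text \<open>At \<open>t\<close> the left tail up to \<open>x - 1\<close> is at most \<open>\<alpha>/2 < 1 - \<alpha>/2\<close>, so \<open>t\<close> lies right of \<open>u\<close>.\<close>
    have "left_tail p X t (x - 1) < left_tail p X u (x - 1)"
      using left_tail_mono[OF t(1), of "x - 1" x] t(2) u(2) assms by simp
    then have "u < t"
      using U.decreasing[OF t(1) u(1)] by (cases "t = u") (auto simp: linorder_neq_iff)
    then show ?thesis
      using True \<open>x + 1 \<in> X\<close> by (simp add: fid_theta_U_eq fid_theta_L_eq t_def u_def)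
  next
    case False
    then show ?thesis
      using Inf_ereal_image_less[OF open_Theta t(1)] \<open>x + 1 \<in> X\<close>
      by (simp add: fid_theta_U_def fid_theta_L_eq t_def)
  qed
next
  case False
  obtain t where t: "t \<in> \<Theta>" "fid_theta_U p \<Theta> X \<alpha> x \<le> ereal t"
  proof (cases "x - 1 \<in> X")
    case True
    interpret U: decreasing_onto_unit_interval "\<lambda>\<theta>. left_tail p X \<theta> (x - 1)" \<Theta>
      using decreasing_onto_left_tail assms(1) True by simp
    show ?thesis
      using that[of "left_tail_inv (x - 1) (1 - \<alpha> / 2)"] U.the_inv_into_mem assms True
      by (simp add: fid_theta_U_eq)
  next
    case False
    obtain t where "t \<in> \<Theta>"
      using Theta_nonempty by blast
    then show ?thesis
      using that[of t] False by (simp add: fid_theta_U_def Inf_lower)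
  qed
  then show ?thesis
    using less_Sup_ereal_image[OF open_Theta t(1)] False by (simp add: fid_theta_L_def)
qed

lemma fid_interval_strict_mono:
  assumes "x \<in> X" "0 < \<alpha>0" "\<alpha>0 < \<alpha>" "\<alpha> < 1"
  shows "fid_interval p \<Theta> X \<alpha> x \<subset> fid_interval p \<Theta> X \<alpha>0 x"
proof -
  let ?L = "\<lambda>\<alpha>. fid_theta_L p \<Theta> X \<alpha> x" and ?U = "\<lambda>\<alpha>. fid_theta_U p \<Theta> X \<alpha> x"
  have L: "?L \<alpha> \<le> ?L \<alpha>0" and U: "?U \<alpha>0 \<le> ?U \<alpha>"
    using fid_theta_L_antimono fid_theta_U_mono assms by auto
  then have subset: "fid_interval p \<Theta> X \<alpha> x \<subseteq> fid_interval p \<Theta> X \<alpha>0 x"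
    unfolding fid_interval_def by (auto intro: order.strict_trans1 order.strict_trans2)
  have U_less_L: "?U \<alpha> < ?L \<alpha>"
    using fid_theta_U_less_L assms by auto
  obtain t where "t \<in> \<Theta>" "ereal t = ?L \<alpha> \<or> ereal t = ?U \<alpha>" "?U \<alpha>0 < ereal t" "ereal t < ?L \<alpha>0"
  proof (cases "x + 1 \<in> X")
    case True
    interpret decreasing_onto_unit_interval "\<lambda>\<theta>. left_tail p X \<theta> x" \<Theta>
      using decreasing_onto_left_tail assms(1) True .
    show ?thesis
      using that[of "left_tail_inv x (\<alpha> / 2)"] the_inv_into_mem assms True U U_less_L
        fid_theta_L_strict_antimono[OF assms(1) True assms(2-4)]
      by (simp add: fid_theta_L_eq)
  next
    case False
    then have "x - 1 \<in> X"
      using consecutive_neighbour[OF consecutive_X X_nontrivial assms(1)] by blast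
    interpret decreasing_onto_unit_interval "\<lambda>\<theta>. left_tail p X \<theta> (x - 1)" \<Theta>
      using decreasing_onto_left_tail assms(1) \<open>x - 1 \<in> X\<close> by simp
    show ?thesis
      using that[of "left_tail_inv (x - 1) (1 - \<alpha> / 2)"] the_inv_into_mem assms \<open>x - 1 \<in> X\<close> L U_less_L
        fid_theta_U_strict_mono[OF assms(1) \<open>x - 1 \<in> X\<close> assms(2-4)]
      by (simp add: fid_theta_U_eq)
  qed
  then have "t \<in> fid_interval p \<Theta> X \<alpha>0 x - fid_interval p \<Theta> X \<alpha> x"
    by (auto simp: fid_interval_def)
  with subset show ?thesis
    by blast
qed

lemma continuous_on_fid_theta_L:
  assumes "x \<in> X"
  shows "continuous_on {0<..<1} (\<lambda>\<alpha>. fid_theta_L p \<Theta> X \<alpha> x)"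
proof (cases "x + 1 \<in> X")
  case True
  interpret decreasing_onto_unit_interval "\<lambda>\<theta>. left_tail p X \<theta> x" \<Theta>
    using decreasing_onto_left_tail assms True .
  have "continuous_on {0<..<1} (\<lambda>\<alpha>. left_tail_inv x (\<alpha> / 2))"
    by (rule continuous_on_compose2[OF continuous_on_the_inv_into]) (auto intro!: continuous_intros)
  then show ?thesis
    using True by (simp add: fid_theta_L_eq continuous_on_ereal)
qed (simp add: fid_theta_L_def)

lemma continuous_on_fid_theta_U:
  assumes "x \<in> X"
  shows "continuous_on {0<..<1} (\<lambda>\<alpha>. fid_theta_U p \<Theta> X \<alpha> x)"
proof (cases "x - 1 \<in> X")
  case True
  interpret decreasing_onto_unit_interval "\<lambda>\<theta>. left_tail p X \<theta> (x - 1)" \<Theta>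
    using decreasing_onto_left_tail assms True by simp
  have "continuous_on {0<..<1} (\<lambda>\<alpha>. left_tail_inv (x - 1) (1 - \<alpha> / 2))"
    by (rule continuous_on_compose2[OF continuous_on_the_inv_into]) (auto intro!: continuous_intros)
  then show ?thesis
    using True by (simp add: fid_theta_U_eq continuous_on_ereal)
qed (simp add: fid_theta_U_def)

lemma continuous_on_fid_pval: "continuous_on \<Theta> (\<lambda>\<theta>. fid_pval p X \<theta> x)"
  unfolding fid_pval_def
  using continuous_on_left_tail continuous_on_right_tail by (intro continuous_intros)

end

theorem proposition8:
  fixes p :: "real \<Rightarrow> int \<Rightarrow> real" and \<Theta> :: "real set" and X :: "int set"
  assumes Theta: "open \<Theta>" "connected \<Theta>" "\<Theta> \<noteq> {}"
    and X: "consecutive X" "\<exists>a\<in>X. \<exists>b\<in>X. a \<noteq> b"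
    and distr: "\<forall>\<theta>\<in>\<Theta>. (p \<theta> has_sum 1) X"
    and A1: "\<forall>\<theta>\<in>\<Theta>. \<forall>x\<in>X. p \<theta> x > 0"
    and A2: "\<forall>x\<in>X. x + 1 \<in> X \<longrightarrow>
               (\<forall>\<theta>1\<in>\<Theta>. \<forall>\<theta>2\<in>\<Theta>. \<theta>1 < \<theta>2 \<longrightarrow> left_tail p X \<theta>2 x < left_tail p X \<theta>1 x)"
    and A3: "\<forall>x\<in>X. \<forall>\<theta>\<in>\<Theta>. (\<lambda>t. p t x) differentiable (at \<theta>)"
    and A4: "\<forall>x\<in>X. x + 1 \<in> X \<longrightarrow>
               ((\<lambda>\<theta>. left_tail p X \<theta> x) \<longlongrightarrow> 1) (theta_to_inf \<Theta>) \<and>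
               ((\<lambda>\<theta>. left_tail p X \<theta> x) \<longlongrightarrow> 0) (theta_to_sup \<Theta>)"
  shows "(\<forall>x\<in>X. \<forall>\<alpha> \<alpha>0. 0 < \<alpha>0 \<and> \<alpha>0 < \<alpha> \<and> \<alpha> < 1 \<longrightarrow>
             fid_interval p \<Theta> X \<alpha> x \<subset> fid_interval p \<Theta> X \<alpha>0 x)
       \<and> (\<forall>x\<in>X. continuous_on {0<..<1} (\<lambda>\<alpha>. fid_theta_L p \<Theta> X \<alpha> x)
                \<and> continuous_on {0<..<1} (\<lambda>\<alpha>. fid_theta_U p \<Theta> X \<alpha> x))
       \<and> (\<forall>x\<in>X. continuous_on \<Theta> (\<lambda>\<theta>. fid_pval p X \<theta> x))"
proof -
  have "continuous_on \<Theta> (\<lambda>\<theta>. p \<theta> x)" if "x \<in> X" for x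
    using A3 that by (metis continuous_at_imp_continuous_on differentiable_imp_continuous_within)
  then interpret fiducial_family p \<Theta> X
    using Theta X distr A1 A2 A4 by unfold_locales (auto simp: less_imp_le)
  show ?thesis
    using fid_interval_strict_mono continuous_on_fid_theta_L continuous_on_fid_theta_U
      continuous_on_fid_pval by blast
qed

end
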